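(* In the troll-farm voting model described in the context, fix an information structure $(F_0,F_1)$ and a type distribution $H$ with $H(\tfrac12)<\tfrac12$, and suppose that under $H$ the government wins the election in both states when the sender plays optimally, i.e. $V_0^*(H)\ge\tfrac12$ and $V_1^*(H)\ge\tfrac12$. Then there exists a type distribution $\hat H$ (a cdf with a density with full support on $\mathbb{R}$) that admits greater polarisation than $H$ and under which the election aggregates information, i.e. $V_0^*(\hat H)<\tfrac12\le V_1^*(\hat H)$.
   Context: Model. There is an unknown state $\theta\in\{0,1\}$, each state having prior probability $\tfrac12$. There is a continuum of voters of mass one; each voter has a type $x\in\mathbb{R}$, types being distributed according to a cdf $H$ with density $h$ having full support on $\mathbb{R}$. A voter of type $x$ who votes for the government receives payoff $1-x$ if $\theta=1$ and $-x$ if $\theta=0$; voting against gives payoff $0$. In state $\theta$, each voter independently draws an informative signal $s\in\mathbb{R}$ from a cdf $F_\theta$ with density $f_\theta$ having full support on $\mathbb{R}$, where $f_0(0)=f_1(0)$ and $m(s)=f_1(s)/f_0(s)$ is strictly increasing. For $x\in(0,1)$ let $s^*(x)=m^{-1}\!\left(\frac{x}{1-x}\right)$. A sender chooses, for each type $x$, $\alpha_x\in[0,1]$ (mass of trolls) and a probability distribution $\tilde F_x$ with density $\tilde f_x$ (trolls' messages, not depending on the state). A voter of type $x$ observes, with probability $1-\alpha_x$, her informative signal, and with probability $\alpha_x$ a message drawn from $\tilde F_x$, without knowing which; after observing $s$ her posterior is $$\pi_x(s)=\frac{(1-\alpha_x)f_1(s)+\alpha_x\tilde f_x(s)}{(1-\alpha_x)f_1(s)+\alpha_x\tilde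 f_x(s)+(1-\alpha_x)f_0(s)+\alpha_x\tilde f_x(s)},$$ and she votes for the government iff $\pi_x(s)\ge x$. Her probability of voting for the government in state $\theta$ is $p_\theta(x)=\int_{\{s:\pi_x(s)\ge x\}}[(1-\alpha_x)f_\theta(s)+\alpha_x\tilde f_x(s)]\,ds$, and the vote share is $V_\theta=\int p_\theta(x)\,dH(x)$. The sender's payoff is $u(V_\theta)$, $u$ strictly increasing; she maximises $\tfrac12u(V_0)+\tfrac12u(V_1)$, and among choices with the same vote shares in both states prefers pointwise-smaller $\alpha$ (strictly smaller for some $x$). $V_\theta^*(H)$ denotes the vote share in state $\theta$ under the sender's optimal strategy when the type distribution is $H$; it equals $V_0^*(H)=H(\tfrac12)+\int_{1/2}^{1}\frac{F_0[s^*(x)]-F_1[s^*(x)]}{xF_0[s^*(x)]-(1-x)F_1[s^*(x)]}(1-x)\,dH(x)$ and $V_1^*(H)=H(\tfrac12)+\int_{1/2}^{1}\frac{F_0[s^*(x)]-F_1[s^*(x)]}{xF_0[s^*(x)]-(1-x)F_1[s^*(x)]}\,x\,dH(x)$. The government wins in state $\theta$ iff its vote share is at least $\tfrac12$; the election aggregates information iff the government wins in state $1$ and not in state $0$. Definition (polarisation): a distribution $\hat H$ admits greater polarisation than $H$ iff $\hat H(x)\ge H(x)$ for all $x\le\tfrac12$ and $\hat H(x)\le H(x)$ for all $x\ge\tfrac12$. *)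

theory Defs
  imports "HOL-Analysis.Analysis"
begin

definition cdf_with_density :: "(real \<Rightarrow> real) \<Rightarrow> (real \<Rightarrow> real) \<Rightarrow> bool" where
  "cdf_with_density F f \<longleftrightarrow>
     (\<forall>x. 0 < f x) \<and> (f has_integral 1) UNIV \<and> (\<forall>x. (f has_integral F x) {..x})"

definition lik_ratio :: "(real \<Rightarrow> real) \<Rightarrow> (real \<Rightarrow> real) \<Rightarrow> real \<Rightarrow> real" where
  "lik_ratio f0 f1 s = f1 s / f0 s"

definition info_structure ::
  "(real \<Rightarrow> real) \<Rightarrow> (real \<Rightarrow> real) \<Rightarrow> (real \<Rightarrow> real) \<Rightarrow> (real \<Rightarrow> real) \<Rightarrow> bool" where
  "info_structure F0 F1 f0 f1 \<longleftrightarrow>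
     cdf_with_density F0 f0 \<and> cdf_with_density F1 f1 \<and> f0 0 = f1 0 \<and>
     strict_mono (lik_ratio f0 f1)"

definition s_star :: "(real \<Rightarrow> real) \<Rightarrow> (real \<Rightarrow> real) \<Rightarrow> real \<Rightarrow> real" where
  "s_star f0 f1 x = inv (lik_ratio f0 f1) (x / (1 - x))"

definition kappa ::
  "(real \<Rightarrow> real) \<Rightarrow> (real \<Rightarrow> real) \<Rightarrow> (real \<Rightarrow> real) \<Rightarrow> (real \<Rightarrow> real) \<Rightarrow> real \<Rightarrow> real" where
  "kappa F0 F1 f0 f1 x =
     (let s = s_star f0 f1 x in (F0 s - F1 s) / (x * F0 s - (1 - x) * F1 s))"

text \<open>Optimal vote shares; dH(x) = h(x) dx since H has density h.\<close>
definition V0_star ::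
  "(real \<Rightarrow> real) \<Rightarrow> (real \<Rightarrow> real) \<Rightarrow> (real \<Rightarrow> real) \<Rightarrow> (real \<Rightarrow> real)
   \<Rightarrow> (real \<Rightarrow> real) \<Rightarrow> (real \<Rightarrow> real) \<Rightarrow> real" where
  "V0_star F0 F1 f0 f1 H h =
     H (1/2) + integral {1/2..1} (\<lambda>x. kappa F0 F1 f0 f1 x * (1 - x) * h x)"

definition V1_star ::
  "(real \<Rightarrow> real) \<Rightarrow> (real \<Rightarrow> real) \<Rightarrow> (real \<Rightarrow> real) \<Rightarrow> (real \<Rightarrow> real)
   \<Rightarrow> (real \<Rightarrow> real) \<Rightarrow> (real \<Rightarrow> real) \<Rightarrow> real" where
  "V1_star F0 F1 f0 f1 H h =
     H (1/2) + integral {1/2..1} (\<lambda>x. kappa F0 F1 f0 f1 x * x * h x)"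

definition greater_polarisation :: "(real \<Rightarrow> real) \<Rightarrow> (real \<Rightarrow> real) \<Rightarrow> bool" where
  "greater_polarisation Hh H \<longleftrightarrow>
     (\<forall>x. x \<le> 1/2 \<longrightarrow> H x \<le> Hh x) \<and> (\<forall>x. 1/2 \<le> x \<longrightarrow> Hh x \<le> H x)"

end

theory Submission
  imports Defs
begin

text \<open>Both optimal vote shares exceed H(1/2) by integrals over the moderate types [1/2, 1], and the
  state-1 integral is strictly larger, since the two integrands differ by kappa(x) (2x - 1) h(x) > 0.
  Multiplying the density on (1/2, 1] by lam = (1/2 - H(1/2)) / (V1 - H(1/2)) \<le> 1 multiplies both
  integrals by lam: V1 drops to exactly 1/2 and V0 strictly below it. The mass removed from (1/2, 1]
  is put back on (1, \<infinity>), which only lowers the cdf to the right of 1/2, so the new type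
  distribution is more polarised.\<close>

lemma has_integral_pos_real:
  fixes f :: "real \<Rightarrow> real"
  assumes f: "(f has_integral i) {a..b}" and "a < b" and pos: "\<And>x. x \<in> {a<..<b} \<Longrightarrow> 0 < f x"
  shows "0 < i"
proof -
  define g where "g x = (if x \<in> {a<..<b} then f x else 0)" for x
  have g: "(g has_integral i) {a..b}"
    by (rule has_integral_spike[OF _ _ f, of "{a, b}"]) (auto simp: g_def)
  have g_nonneg: "0 \<le> g x" for x
    using pos by (auto simp: g_def less_imp_le)
  have "g absolutely_integrable_on {a..b}"
    using g g_nonneg by (intro nonnegative_absolutely_integrable_1) auto
  then have g_int: "integrable lebesgue (\<lambda>x. indicator {a..b} x *\<^sub>R g x)"
    by (simp add: set_integrable_def)
  have i_eq: "i = set_lebesgue_integral lebesgue {a..b} g"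
    using set_lebesgue_integral_eq_integral(2)[OF \<open>g absolutely_integrable_on {a..b}\<close>] g
    by (simp add: integral_unique)
  moreover have "i \<noteq> 0"
  proof
    assume "i = 0"
    with i_eq have "AE x in lebesgue. indicator {a..b} x *\<^sub>R g x = 0"
      unfolding set_lebesgue_integral_def
      using integral_nonneg_eq_0_iff_AE[OF g_int] g_nonneg by (simp add: indicator_def)
    then have "AE x in lebesgue. x \<notin> {a<..<b}"
      by eventually_elim (use pos in \<open>fastforce simp: g_def indicator_def split: if_splits\<close>)
    then have "{a<..<b} \<in> null_sets lebesgue"
      by (subst (asm) AE_iff_null) (simp_all add: greaterThanLessThan_def greaterThan_def lessThan_def Int_def)
    then have "negligible (box a b)"
      by (simp add: negligible_iff_null_sets)
    then show False
      using \<open>a < b\<close> negligible_interval(2)[of a b] by simp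
  qed
  ultimately show ?thesis
    using has_integral_nonneg[OF g g_nonneg] by linarith
qed

lemma has_integral_atMost_Un_interval:
  fixes g :: "real \<Rightarrow> real"
  assumes "(g has_integral i) {..a}" and "(g has_integral j) {a..b}" and "a \<le> b"
  shows "(g has_integral (i + j)) {..b}"
proof -
  have "{..a} \<inter> {a..b} = {a}" and "{..a} \<union> {a..b} = {..b}"
    using \<open>a \<le> b\<close> by auto
  with has_integral_Un[OF assms(1,2)] show ?thesis
    by (metis negligible_sing)
qed

lemma has_integral_interval_of_primitive:
  fixes g G :: "real \<Rightarrow> real"
  assumes G: "\<And>x. (g has_integral G x) {..x}" and "a \<le> b"
  shows "(g has_integral (G b - G a)) {a..b}"
proof -
  have "g integrable_on {a..b}"
    by (rule integrable_on_subinterval[OF has_integral_integrable[OF G[of b]]]) auto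
  then obtain j where j: "(g has_integral j) {a..b}"
    by blast
  have "(g has_integral (G a + j)) {..b}"
    by (rule has_integral_atMost_Un_interval[OF G[of a] j \<open>a \<le> b\<close>])
  then have "G b = G a + j"
    using G[of b] by (rule has_integral_unique[symmetric])
  with j show ?thesis
    by simp
qed

lemma has_integral_greaterThan_of_primitive:
  fixes g G :: "real \<Rightarrow> real"
  assumes G: "\<And>x. (g has_integral G x) {..x}" and T: "(g has_integral T) UNIV"
  shows "(g has_integral (T - G a)) {a<..}"
proof -
  have "((\<lambda>x. g x - (if x \<in> {..a} then g x else 0)) has_integral (T - G a)) UNIV"
    using has_integral_diff[OF T has_integral_restrict_UNIV[THEN iffD2, OF G[of a]]] .
  moreover have "(\<lambda>x. g x - (if x \<in> {..a} then g x else 0)) = (\<lambda>x. if x \<in> {a<..} then g x else 0)"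
    by auto
  ultimately show ?thesis
    by (metis has_integral_restrict_UNIV)
qed

lemma cdf_with_density_interval:
  assumes "cdf_with_density F f" and "a \<le> b"
  shows "(f has_integral (F b - F a)) {a..b}"
  using assms has_integral_interval_of_primitive[of f F a b] by (simp add: cdf_with_density_def)

lemma cdf_with_density_greaterThan:
  assumes "cdf_with_density F f"
  shows "(f has_integral (1 - F a)) {a<..}"
  using assms has_integral_greaterThan_of_primitive[of f F 1 a] by (simp add: cdf_with_density_def)

lemma cdf_with_density_nonneg:
  assumes "cdf_with_density F f"
  shows "0 \<le> F x"
  using assms has_integral_nonneg[of f "F x" "{..x}"] by (simp add: cdf_with_density_def less_imp_le)

lemma cdf_with_density_mono:
  assumes "cdf_with_density F f" and "a \<le> b"
  shows "F a \<le> F b"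
  using assms has_integral_nonneg[OF cdf_with_density_interval[OF assms]]
  by (simp add: cdf_with_density_def less_imp_le)

lemma cdf_with_density_less_one:
  assumes "cdf_with_density F f"
  shows "F x < 1"
proof -
  have "0 < F (x + 1) - F x"
    using assms by (intro has_integral_pos_real[OF cdf_with_density_interval[OF assms]])
      (simp_all add: cdf_with_density_def)
  moreover have "0 \<le> 1 - F (x + 1)"
    using assms has_integral_nonneg[OF cdf_with_density_greaterThan[OF assms]]
    by (simp add: cdf_with_density_def less_imp_le)
  ultimately show ?thesis
    by linarith
qed

lemma cdf_less_if_density_less_above:
  assumes F0: "cdf_with_density F0 f0" and F1: "cdf_with_density F1 f1"
    and less: "\<And>u. s < u \<Longrightarrow> f0 u < f1 u"
  shows "F1 s < F0 s"
proof -
  let ?g = "\<lambda>u. f1 u - f0 u" and ?G = "\<lambda>u. F1 u - F0 u"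
  have G: "(?g has_integral ?G u) {..u}" for u
    using F0 F1 by (intro has_integral_diff) (auto simp: cdf_with_density_def)
  have T: "(?g has_integral 0) UNIV"
    using has_integral_diff[of f1 1 UNIV f0 1] F0 F1 by (simp add: cdf_with_density_def)
  have "0 < ?G (s + 1) - ?G s"
    by (rule has_integral_pos_real[OF has_integral_interval_of_primitive[OF G]]) (use less in auto)
  moreover have "0 \<le> 0 - ?G (s + 1)"
    by (rule has_integral_nonneg[OF has_integral_greaterThan_of_primitive[OF G T]])
      (use less in \<open>auto simp: less_imp_le\<close>)
  ultimately show ?thesis
    by simp
qed

lemma info_structure_lik_ratio_0:
  assumes "info_structure F0 F1 f0 f1"
  shows "lik_ratio f0 f1 0 = 1"
proof -
  have "0 < f0 0" and "f0 0 = f1 0"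
    using assms by (simp_all add: info_structure_def cdf_with_density_def)
  then show ?thesis
    by (simp add: lik_ratio_def)
qed

lemma info_structure_density_less:
  assumes "info_structure F0 F1 f0 f1" and "0 < u"
  shows "f0 u < f1 u"
proof -
  have "lik_ratio f0 f1 0 < lik_ratio f0 f1 u"
    using assms by (simp add: info_structure_def strict_mono_less)
  moreover have "0 < f0 u"
    using assms(1) by (simp add: info_structure_def cdf_with_density_def)
  ultimately show ?thesis
    using info_structure_lik_ratio_0[OF assms(1)] by (simp add: lik_ratio_def)
qed

lemma s_star_pos:
  assumes info: "info_structure F0 F1 f0 f1"
    and sstar_defined: "\<forall>t>0. \<exists>s. lik_ratio f0 f1 s = t"
    and "1/2 < x" and "x < 1"
  shows "0 < s_star f0 f1 x"
proof -
  have sm: "strict_mono (lik_ratio f0 f1)"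
    using info by (simp add: info_structure_def)
  have "1 < x / (1 - x)"
    using assms by (simp add: field_simps)
  with sstar_defined obtain s where s: "lik_ratio f0 f1 s = x / (1 - x)"
    by force
  then have "s_star f0 f1 x = s"
    unfolding s_star_def by (metis inv_f_f sm strict_mono_imp_inj_on)
  moreover have "lik_ratio f0 f1 0 < lik_ratio f0 f1 s"
    using s \<open>1 < _\<close> info_structure_lik_ratio_0[OF info] by simp
  ultimately show ?thesis
    using sm by (simp add: strict_mono_less)
qed

lemma kappa_pos:
  assumes info: "info_structure F0 F1 f0 f1"
    and sstar_defined: "\<forall>t>0. \<exists>s. lik_ratio f0 f1 s = t"
    and "1/2 < x" and "x < 1"
  shows "0 < kappa F0 F1 f0 f1 x"
proof -
  define s where "s = s_star f0 f1 x"
  have F0: "cdf_with_density F0 f0" and F1: "cdf_with_density F1 f1"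
    using info by (auto simp: info_structure_def)
  have "F1 s < F0 s"
    using s_star_pos[OF assms] info_structure_density_less[OF info]
    by (intro cdf_less_if_density_less_above[OF F0 F1]) (simp add: s_def)
  moreover have "(1 - x) * F0 s \<le> x * F0 s"
    using cdf_with_density_nonneg[OF F0] \<open>1/2 < x\<close> by (intro mult_right_mono) auto
  moreover have "(1 - x) * F1 s < (1 - x) * F0 s"
    using \<open>F1 s < F0 s\<close> \<open>x < 1\<close> by simp
  ultimately show ?thesis
    by (simp add: kappa_def s_def [symmetric])
qed

lemma V0_star_less_V1_star:
  assumes info: "info_structure F0 F1 f0 f1"
    and sstar_defined: "\<forall>t>0. \<exists>s. lik_ratio f0 f1 s = t"
    and H: "cdf_with_density H h"
    and int0: "(\<lambda>x. kappa F0 F1 f0 f1 x * (1 - x) * h x) integrable_on {1/2..1}"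
    and int1: "(\<lambda>x. kappa F0 F1 f0 f1 x * x * h x) integrable_on {1/2..1}"
  shows "V0_star F0 F1 f0 f1 H h < V1_star F0 F1 f0 f1 H h"
proof -
  let ?k = "kappa F0 F1 f0 f1"
  have diff: "((\<lambda>x. ?k x * x * h x - ?k x * (1 - x) * h x) has_integral
      (V1_star F0 F1 f0 f1 H h - V0_star F0 F1 f0 f1 H h)) {1/2..1}"
    using has_integral_diff[OF int1[THEN integrable_integral] int0[THEN integrable_integral]]
    by (simp add: V0_star_def V1_star_def)
  have pos: "0 < ?k x * x * h x - ?k x * (1 - x) * h x" if "x \<in> {1/2<..<1}" for x
  proof -
    have "?k x * x * h x - ?k x * (1 - x) * h x = ?k x * (2 * x - 1) * h x"
      by (simp add: algebra_simps)
    then show ?thesis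
      using that kappa_pos[OF info sstar_defined] H by (simp add: cdf_with_density_def)
  qed
  have "0 < V1_star F0 F1 f0 f1 H h - V0_star F0 F1 f0 f1 H h"
    by (rule has_integral_pos_real[OF diff _ pos]) simp_all
  then show ?thesis
    by simp
qed

definition reweighted_density ::
  "real \<Rightarrow> real \<Rightarrow> real \<Rightarrow> real \<Rightarrow> (real \<Rightarrow> real) \<Rightarrow> real \<Rightarrow> real" where
  "reweighted_density a b lam mu h x = (if x \<le> a then 1 else if x \<le> b then lam else mu) * h x"

definition reweighted_cdf ::
  "real \<Rightarrow> real \<Rightarrow> real \<Rightarrow> real \<Rightarrow> (real \<Rightarrow> real) \<Rightarrow> real \<Rightarrow> real" where
  "reweighted_cdf a b lam mu H x =
     (if x \<le> a then H x
      else if x \<le> b then H a + lam * (H x - H a)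
      else H a + lam * (H b - H a) + mu * (H x - H b))"

lemma reweighted_cdf_has_integral:
  assumes H: "cdf_with_density H h" and "a \<le> b"
  shows "(reweighted_density a b lam mu h has_integral reweighted_cdf a b lam mu H x) {..x}"
proof -
  let ?hh = "reweighted_density a b lam mu h" and ?Hh = "reweighted_cdf a b lam mu H"
  have lower: "(?hh has_integral ?Hh x) {..x}" if "x \<le> a" for x
  proof -
    have "(h has_integral H x) {..x}"
      using H by (simp add: cdf_with_density_def)
    then have "(?hh has_integral H x) {..x}"
      by (rule has_integral_eq[rotated]) (use that in \<open>simp add: reweighted_density_def\<close>)
    with that show ?thesis
      by (simp add: reweighted_cdf_def)
  qed
  have middle: "(?hh has_integral ?Hh x) {..x}" if "a \<le> x" "x \<le> b" for x
  proof -
    have "(?hh has_integral lam * (H x - H a)) {a..x}"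
      by (rule has_integral_spike[OF negligible_sing[of a] _
            has_integral_mult_right[OF cdf_with_density_interval[OF H \<open>a \<le> x\<close>]]])
        (use that in \<open>auto simp: reweighted_density_def\<close>)
    from has_integral_atMost_Un_interval[OF lower[of a] this \<open>a \<le> x\<close>] show ?thesis
      using lower[of x] that by (cases "x \<le> a") (auto simp: reweighted_cdf_def)
  qed
  have upper: "(?hh has_integral ?Hh x) {..x}" if "b < x" for x
  proof -
    have "(?hh has_integral mu * (H x - H b)) {b..x}"
      by (rule has_integral_spike[OF negligible_sing[of b] _
            has_integral_mult_right[OF cdf_with_density_interval[OF H]]])
        (use that \<open>a \<le> b\<close> in \<open>auto simp: reweighted_density_def\<close>)
    from has_integral_atMost_Un_interval[OF middle[of b] this] show ?thesis
      using that \<open>a \<le> b\<close> by (cases "b = a") (auto simp: reweighted_cdf_def)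
  qed
  show ?thesis
    using lower middle upper by (meson linorder_not_le nle_le)
qed

lemma cdf_with_density_reweighted:
  assumes H: "cdf_with_density H h" and "a \<le> b" and "0 < lam" and "0 < mu"
    and mass: "H a + lam * (H b - H a) + mu * (1 - H b) = 1"
  shows "cdf_with_density (reweighted_cdf a b lam mu H) (reweighted_density a b lam mu h)"
proof -
  let ?hh = "reweighted_density a b lam mu h"
  have "(?hh has_integral mu * (1 - H b)) {b<..}"
    by (rule has_integral_eq[OF _ has_integral_mult_right[OF cdf_with_density_greaterThan[OF H]]])
      (use \<open>a \<le> b\<close> in \<open>auto simp: reweighted_density_def\<close>)
  moreover have "{..b} \<inter> {b<..} = {}" and "{..b} \<union> {b<..} = UNIV"
    by auto
  ultimately have "(?hh has_integral reweighted_cdf a b lam mu H b + mu * (1 - H b)) UNIV"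
    using has_integral_Un[OF reweighted_cdf_has_integral[OF H \<open>a \<le> b\<close>]] by (metis negligible_empty)
  moreover have "0 < ?hh x" for x
    using H \<open>0 < lam\<close> \<open>0 < mu\<close> by (simp add: reweighted_density_def cdf_with_density_def)
  moreover have "reweighted_cdf a b lam mu H b + mu * (1 - H b) = 1"
    using mass \<open>a \<le> b\<close> by (auto simp: reweighted_cdf_def)
  ultimately show ?thesis
    using reweighted_cdf_has_integral[OF H \<open>a \<le> b\<close>] by (simp add: cdf_with_density_def)
qed

lemma compensating_tail_weight:
  assumes H: "cdf_with_density H h" and "a \<le> b" and "lam \<le> 1"
  defines "mu \<equiv> (1 - H a - lam * (H b - H a)) / (1 - H b)"
  shows "1 \<le> mu" and "H a + lam * (H b - H a) + mu * (1 - H b) = 1"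
proof -
  have "H b < 1"
    using cdf_with_density_less_one[OF H] .
  moreover have "lam * (H b - H a) \<le> H b - H a"
    using cdf_with_density_mono[OF H \<open>a \<le> b\<close>] \<open>lam \<le> 1\<close> mult_right_mono[of lam 1] by simp
  ultimately show "1 \<le> mu" and "H a + lam * (H b - H a) + mu * (1 - H b) = 1"
    by (simp_all add: mu_def field_simps)
qed

lemma reweighted_cdf_le:
  assumes H: "cdf_with_density H h" and "a \<le> b" and "a \<le> x" and "lam \<le> 1" and "1 \<le> mu"
    and mass: "H a + lam * (H b - H a) + mu * (1 - H b) = 1"
  shows "reweighted_cdf a b lam mu H x \<le> H x"
proof (cases "x \<le> b")
  case True
  have "lam * (H x - H a) \<le> H x - H a"
    using cdf_with_density_mono[OF H \<open>a \<le> x\<close>] \<open>lam \<le> 1\<close> mult_right_mono[of lam 1] by simp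
  then show ?thesis
    using True by (simp add: reweighted_cdf_def)
next
  case False
  then have "reweighted_cdf a b lam mu H x = 1 - mu * (1 - H x)"
    using mass \<open>a \<le> b\<close> by (simp add: reweighted_cdf_def algebra_simps)
  moreover have "1 - H x \<le> mu * (1 - H x)"
    using cdf_with_density_less_one[OF H, of x] \<open>1 \<le> mu\<close> mult_right_mono[of 1 mu] by simp
  ultimately show ?thesis
    by simp
qed

lemma greater_polarisation_reweighted:
  assumes H: "cdf_with_density H h" and "1/2 \<le> b" and "lam \<le> 1" and "1 \<le> mu"
    and mass: "H (1/2) + lam * (H b - H (1/2)) + mu * (1 - H b) = 1"
  shows "greater_polarisation (reweighted_cdf (1/2) b lam mu H) H"
  using reweighted_cdf_le[OF H \<open>1/2 \<le> b\<close> _ \<open>lam \<le> 1\<close> \<open>1 \<le> mu\<close> mass]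
  by (simp add: greater_polarisation_def reweighted_cdf_def)

lemma integral_reweighted_density:
  assumes "c \<le> b"
  shows "integral {a..c} (\<lambda>x. g x * reweighted_density a b lam mu h x) =
    lam * integral {a..c} (\<lambda>x. g x * h x)"
proof -
  have "integral {a..c} (\<lambda>x. g x * reweighted_density a b lam mu h x) =
      integral {a..c} (\<lambda>x. lam * (g x * h x))"
    by (rule integral_spike[OF negligible_sing[of a]]) (use assms in \<open>auto simp: reweighted_density_def\<close>)
  then show ?thesis
    by simp
qed

lemma V0_star_reweighted:
  assumes "1 \<le> b"
  shows "V0_star F0 F1 f0 f1 (reweighted_cdf (1/2) b lam mu H) (reweighted_density (1/2) b lam mu h) =
    H (1/2) + lam * (V0_star F0 F1 f0 f1 H h - H (1/2))"
  using integral_reweighted_density[OF assms, of "1/2" "\<lambda>x. kappa F0 F1 f0 f1 x * (1 - x)"]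
  by (simp add: V0_star_def reweighted_cdf_def)

lemma V1_star_reweighted:
  assumes "1 \<le> b"
  shows "V1_star F0 F1 f0 f1 (reweighted_cdf (1/2) b lam mu H) (reweighted_density (1/2) b lam mu h) =
    H (1/2) + lam * (V1_star F0 F1 f0 f1 H h - H (1/2))"
  using integral_reweighted_density[OF assms, of "1/2" "\<lambda>x. kappa F0 F1 f0 f1 x * x"]
  by (simp add: V1_star_def reweighted_cdf_def)

theorem proposition3:
  fixes F0 F1 f0 f1 H h :: "real \<Rightarrow> real"
  assumes info: "info_structure F0 F1 f0 f1"
    and sstar_defined: "\<forall>t>0. \<exists>s. lik_ratio f0 f1 s = t"
    and typeH: "cdf_with_density H h"
    and H_half: "H (1/2) < 1/2"
    and win0: "V0_star F0 F1 f0 f1 H h \<ge> 1/2"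
    and win1: "V1_star F0 F1 f0 f1 H h \<ge> 1/2"
  shows "\<exists>Hh hh. cdf_with_density Hh hh \<and> greater_polarisation Hh H \<and>
           V0_star F0 F1 f0 f1 Hh hh < 1/2 \<and> 1/2 \<le> V1_star F0 F1 f0 f1 Hh hh"
proof -
  let ?V0 = "V0_star F0 F1 f0 f1 H h" and ?V1 = "V1_star F0 F1 f0 f1 H h"
  let ?k = "kappa F0 F1 f0 f1"
  define lam where "lam = (1/2 - H (1/2)) / (?V1 - H (1/2))"
  define mu where "mu = (1 - H (1/2) - lam * (H 1 - H (1/2))) / (1 - H 1)"
  have lam: "0 < lam" "lam \<le> 1"
    using H_half win1 by (simp_all add: lam_def)
  have mu: "1 \<le> mu" "H (1/2) + lam * (H 1 - H (1/2)) + mu * (1 - H 1) = 1"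
    unfolding mu_def using compensating_tail_weight[OF typeH _ \<open>lam \<le> 1\<close>, of "1/2" 1] by simp_all
  \<comment> \<open>a non-integrable integrand has integral 0, which would force V = H(1/2) < 1/2\<close>
  have "(\<lambda>x. ?k x * (1 - x) * h x) integrable_on {1/2..1}"
    using win0 H_half not_integrable_integral unfolding V0_star_def by fastforce
  moreover have "(\<lambda>x. ?k x * x * h x) integrable_on {1/2..1}"
    using win1 H_half not_integrable_integral unfolding V1_star_def by fastforce
  ultimately have "?V0 < ?V1"
    by (rule V0_star_less_V1_star[OF info sstar_defined typeH])
  then have "H (1/2) + lam * (?V0 - H (1/2)) < H (1/2) + lam * (?V1 - H (1/2))"
    using lam by simp
  moreover have "H (1/2) + lam * (?V1 - H (1/2)) = 1/2"
    using H_half win1 by (simp add: lam_def)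
  moreover have "cdf_with_density (reweighted_cdf (1/2) 1 lam mu H) (reweighted_density (1/2) 1 lam mu h)"
    using cdf_with_density_reweighted[OF typeH _ \<open>0 < lam\<close> _ mu(2)] mu(1) by simp
  moreover have "greater_polarisation (reweighted_cdf (1/2) 1 lam mu H) H"
    using greater_polarisation_reweighted[OF typeH _ \<open>lam \<le> 1\<close> mu] by simp
  ultimately show ?thesis
    using V0_star_reweighted[of 1 F0 F1 f0 f1 lam mu H h] V1_star_reweighted[of 1 F0 F1 f0 f1 lam mu H h]
    by (intro exI[of _ "reweighted_cdf (1/2) 1 lam mu H"] exI[of _ "reweighted_density (1/2) 1 lam mu h"])
      simp
qed

end
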